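(* Let $A\in\mathrm{SL}(2,\mathbb R)$. If $A\Lambda_q$ contains both $(1,0)^T$ and $(0,1)^T$, then $A\in G_q$ and in particular $A\Lambda_q=\Lambda_q$. Consequently: (1) for $B\in\mathrm{SL}(2,\mathbb R)$, $B\Lambda_q=\Lambda_q$ if and only if $B\in G_q$; hence the sets $C\Lambda_q$, $C\in\mathrm{SL}(2,\mathbb R)$, are in bijection with $\mathrm{SL}(2,\mathbb R)/G_q$ via $C\Lambda_q\leftrightarrow CG_q$; (2) for $B\in\mathrm{SL}(2,\mathbb R)$, if $B\Lambda_q$ contains a horizontal vector $(a,0)^T$ with $a>0$, then there exists $b\in\mathbb R$ with $B\Lambda_q=g_{a,b}\Lambda_q$.
   Context: Fix an integer $q\ge3$, let $\lambda_q=2\cos(\pi/q)$, and let $G_q\subset \mathrm{SL}(2,\mathbb R)$ be the Hecke triangle group generated by $S=\begin{pmatrix}0&-1\\1&0\end{pmatrix}$ and $T_q=\begin{pmatrix}1&\lambda_q\\0&1\end{pmatrix}$, acting linearly on $\mathbb R^2$. Set $\Lambda_q=G_q(1,0)^T$, and for $A\in\mathrm{SL}(2,\mathbb R)$ write $A\Lambda_q=\{A\mathbf v:\mathbf v\in\Lambda_q\}$. For $a>0$, $b\in\mathbb R$, $g_{a,b}=\begin{pmatrix}a&b\\0&a^{-1}\end{pmatrix}$. *)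

theory Defs
  imports "HOL-Analysis.Analysis"
begin

type_synonym mat2 = "real^2^2"

definition mat2 :: "real \<Rightarrow> real \<Rightarrow> real \<Rightarrow> real \<Rightarrow> mat2" where
  "mat2 a b c d = vector [vector [a, b], vector [c, d]]"

definition vec2 :: "real \<Rightarrow> real \<Rightarrow> real^2" where
  "vec2 x y = vector [x, y]"

definition SL2 :: "mat2 set" where
  "SL2 = {A. det A = 1}"

definition lambda_q :: "nat \<Rightarrow> real" where
  "lambda_q q = 2 * cos (pi / real q)"

definition S_mat :: mat2 where
  "S_mat = mat2 0 (-1) 1 0"

definition T_mat :: "nat \<Rightarrow> mat2" where
  "T_mat q = mat2 1 (lambda_q q) 0 1"

inductive_set hecke_group :: "nat \<Rightarrow> mat2 set" for q :: nat where
  one: "mat 1 \<in> hecke_group q"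
| S: "S_mat \<in> hecke_group q"
| S_inv: "matrix_inv S_mat \<in> hecke_group q"
| T: "T_mat q \<in> hecke_group q"
| T_inv: "matrix_inv (T_mat q) \<in> hecke_group q"
| mult: "A \<in> hecke_group q \<Longrightarrow> B \<in> hecke_group q \<Longrightarrow> A ** B \<in> hecke_group q"

definition Lambda_q :: "nat \<Rightarrow> (real^2) set" where
  "Lambda_q q = {A *v vec2 1 0 | A. A \<in> hecke_group q}"

definition mat_image :: "mat2 \<Rightarrow> (real^2) set \<Rightarrow> (real^2) set" where
  "mat_image A X = (\<lambda>v. A *v v) ` X"

definition left_coset :: "mat2 \<Rightarrow> mat2 set \<Rightarrow> mat2 set" where
  "left_coset C G = (\<lambda>g. C ** g) ` G"

definition g_ab :: "real \<Rightarrow> real \<Rightarrow> mat2" where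
  "g_ab a b = mat2 a b 0 (inverse a)"

end

theory Submission
  imports Defs
begin

text \<open>
  The coordinates of every vector of \<Lambda>_q are 0 or of absolute value at least 1. Indeed, with
  s_k = sin(k\<pi>/q) / sin(\<pi>/q), the elements (T_q S)^j S^-1 = (s_j, s_(j+1); s_(j-1), s_j) of G_q,
  1 \<le> j \<le> q - 1, have entries that are 0 or \<ge> 1. The orbit of the standard basis under the monoid
  they generate, together with its rotations by multiples of \<pi>/2, is G_q-invariant and contains
  (1, 0), hence contains \<Lambda>_q. Consequently (x, 1) \<in> \<Lambda>_q forces x \<in> \<lambda>_q \<int>, because
  S T_q^-m (x, 1) = (-1, x - m \<lambda>_q) with |x - m \<lambda>_q| < 1 for the nearest integer m.

  If A \<Lambda>_q contains e_1 and e_2, choose g \<in> G_q with A g e_1 = e_1. Then A g = (1, x; 0, 1), and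
  e_2 \<in> A g \<Lambda>_q puts (-x, 1) into \<Lambda>_q, so A g is a power of T_q and A \<in> G_q. The other
  statements follow formally from this and g \<Lambda>_q = \<Lambda>_q for g \<in> G_q.
\<close>

lemma mat2_nth [simp]:
  "mat2 a b c d $ 1 $ 1 = a" "mat2 a b c d $ 1 $ 2 = b"
  "mat2 a b c d $ 2 $ 1 = c" "mat2 a b c d $ 2 $ 2 = d"
  by (simp_all add: mat2_def)

lemma vec2_nth [simp]: "vec2 x y $ 1 = x" "vec2 x y $ 2 = y"
  by (simp_all add: vec2_def)

lemma mat2_eq_iff: "mat2 a b c d = mat2 a' b' c' d' \<longleftrightarrow> a = a' \<and> b = b' \<and> c = c' \<and> d = d'"
  by (metis mat2_nth)

lemma vec2_eq_iff: "vec2 x y = vec2 x' y' \<longleftrightarrow> x = x' \<and> y = y'"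
  by (metis vec2_nth)

lemma mat2_cases [cases type]:
  obtains a b c d where "M = mat2 a b c d"
proof
  show "M = mat2 (M$1$1) (M$1$2) (M$2$1) (M$2$2)"
    unfolding vec_eq_iff forall_2 by simp
qed

lemma vec2_cases [cases type]:
  obtains x y where "v = vec2 x y"
proof
  show "v = vec2 (v$1) (v$2)"
    unfolding vec_eq_iff forall_2 by simp
qed

lemma mat2_mult:
  "mat2 a b c d ** mat2 a' b' c' d' =
     mat2 (a*a' + b*c') (a*b' + b*d') (c*a' + d*c') (c*b' + d*d')"
  unfolding vec_eq_iff forall_2 by (simp add: matrix_matrix_mult_def sum_2)

lemma mat2_mult_vec2: "mat2 a b c d *v vec2 x y = vec2 (a*x + b*y) (c*x + d*y)"
  unfolding vec_eq_iff forall_2 by (simp add: matrix_vector_mult_def sum_2)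

lemma mat_1_eq_mat2: "(mat 1 :: mat2) = mat2 1 0 0 1"
  unfolding vec_eq_iff forall_2 by (simp add: mat_def)

lemma det_mat2: "det (mat2 a b c d) = a*d - b*c"
  by (simp add: det_2)

definition adj2 :: "mat2 \<Rightarrow> mat2" where
  "adj2 M = mat2 (M$2$2) (- M$1$2) (- M$2$1) (M$1$1)"

lemma adj2_mat2 [simp]: "adj2 (mat2 a b c d) = mat2 d (-b) (-c) a"
  by (simp add: adj2_def)

lemma adj2_mult: "adj2 (A ** B) = adj2 B ** adj2 A"
  by (cases A, cases B) (simp add: mat2_mult mat2_eq_iff algebra_simps)

lemma det_adj2: "det (adj2 M) = det M"
  by (cases M) (simp add: det_mat2 algebra_simps)

lemma mult_adj2_right: "det M = 1 \<Longrightarrow> M ** adj2 M = mat 1"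
  by (cases M) (simp add: mat2_mult mat_1_eq_mat2 det_mat2 mat2_eq_iff algebra_simps)

lemma mult_adj2_left: "det M = 1 \<Longrightarrow> adj2 M ** M = mat 1"
  by (cases M) (simp add: mat2_mult mat_1_eq_mat2 det_mat2 mat2_eq_iff algebra_simps)

lemma matrix_inv_eq_adj2: "det M = 1 \<Longrightarrow> matrix_inv M = adj2 M"
proof -
  assume det: "det M = 1"
  have "\<exists>M'. M ** M' = mat 1 \<and> M' ** M = mat 1"
    using mult_adj2_right[OF det] mult_adj2_left[OF det] by blast
  then have inv: "M ** matrix_inv M = mat 1 \<and> matrix_inv M ** M = mat 1"
    unfolding matrix_inv_def by (rule someI_ex)
  have "matrix_inv M = (adj2 M ** M) ** matrix_inv M"
    using mult_adj2_left[OF det] by simp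
  also have "\<dots> = adj2 M"
    using inv by (simp add: matrix_mul_assoc[symmetric])
  finally show ?thesis .
qed

lemma mat_image_mult: "mat_image (A ** B) X = mat_image A (mat_image B X)"
  unfolding mat_image_def by (simp add: image_image matrix_vector_mul_assoc)

section \<open>The Hecke group and its orbit of (1, 0)\<close>

lemma S_mat_hecke_group: "mat2 0 (-1) 1 0 \<in> hecke_group q"
  using hecke_group.S by (simp add: S_mat_def)

lemma det_hecke_group: "A \<in> hecke_group q \<Longrightarrow> det A = 1"
proof (induction rule: hecke_group.induct)
  case (mult A B)
  then show ?case by (simp add: det_mul)
qed (simp_all add: S_mat_def T_mat_def det_mat2 mat_1_eq_mat2 matrix_inv_eq_adj2)

lemma adj2_hecke_group: "A \<in> hecke_group q \<Longrightarrow> adj2 A \<in> hecke_group q"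
proof (induction rule: hecke_group.induct)
  case one
  then show ?case using hecke_group.one by (simp add: mat_1_eq_mat2)
next
  case S
  then show ?case using hecke_group.S_inv by (simp add: S_mat_def det_mat2 matrix_inv_eq_adj2)
next
  case S_inv
  then show ?case using hecke_group.S by (simp add: S_mat_def det_mat2 matrix_inv_eq_adj2)
next
  case T
  then show ?case using hecke_group.T_inv by (simp add: T_mat_def det_mat2 matrix_inv_eq_adj2)
next
  case T_inv
  then show ?case using hecke_group.T by (simp add: T_mat_def det_mat2 matrix_inv_eq_adj2)
next
  case (mult A B)
  then show ?case by (simp add: adj2_mult hecke_group.mult)
qed

lemma T_mat_power_hecke_group: "mat2 1 (of_int m * lambda_q q) 0 1 \<in> hecke_group q"
proof -
  have nat_power: "mat2 1 (of_nat n * lambda_q q) 0 1 \<in> hecke_group q" for n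
  proof (induction n)
    case 0
    then show ?case using hecke_group.one by (simp add: mat_1_eq_mat2)
  next
    case (Suc n)
    have "T_mat q ** mat2 1 (of_nat n * lambda_q q) 0 1 = mat2 1 (of_nat (Suc n) * lambda_q q) 0 1"
      by (simp add: T_mat_def mat2_mult algebra_simps)
    then show ?case using hecke_group.mult[OF hecke_group.T Suc] by simp
  qed
  show ?thesis
  proof (cases "m \<ge> 0")
    case True
    then show ?thesis using nat_power[of "nat m"] by simp
  next
    case False
    then show ?thesis using adj2_hecke_group[OF nat_power[of "nat (- m)"]] by simp
  qed
qed

lemma hecke_group_mult_e1_in_Lambda: "g \<in> hecke_group q \<Longrightarrow> g *v vec2 1 0 \<in> Lambda_q q"
  unfolding Lambda_q_def by auto

lemma e1_in_Lambda: "vec2 1 0 \<in> Lambda_q q"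
  using hecke_group_mult_e1_in_Lambda[OF hecke_group.one] by simp

lemma e2_in_Lambda: "vec2 0 1 \<in> Lambda_q q"
  using hecke_group_mult_e1_in_Lambda[OF S_mat_hecke_group] by (simp add: mat2_mult_vec2)

lemma mat_image_hecke_group:
  assumes "g \<in> hecke_group q"
  shows "mat_image g (Lambda_q q) = Lambda_q q"
proof
  show "mat_image g (Lambda_q q) \<subseteq> Lambda_q q"
    unfolding mat_image_def Lambda_q_def using assms
    by (auto simp: matrix_vector_mul_assoc intro: hecke_group.mult)
  show "Lambda_q q \<subseteq> mat_image g (Lambda_q q)"
  proof
    fix v
    assume "v \<in> Lambda_q q"
    then obtain h where h: "h \<in> hecke_group q" "v = h *v vec2 1 0"
      unfolding Lambda_q_def by auto
    have "v = g *v ((adj2 g ** h) *v vec2 1 0)"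
      using h(2) mult_adj2_right[OF det_hecke_group[OF assms]]
      by (simp add: matrix_vector_mul_assoc matrix_mul_assoc)
    moreover have "(adj2 g ** h) *v vec2 1 0 \<in> Lambda_q q"
      by (intro hecke_group_mult_e1_in_Lambda hecke_group.mult adj2_hecke_group assms h(1))
    ultimately show "v \<in> mat_image g (Lambda_q q)"
      unfolding mat_image_def by blast
  qed
qed

section \<open>An invariant set of vectors with a gap at the origin\<close>

definition hecke_sin :: "nat \<Rightarrow> nat \<Rightarrow> real" where
  "hecke_sin q k = sin (real k * pi / real q) / sin (pi / real q)"

lemma hecke_sin_Suc_Suc:
  "hecke_sin q (Suc (Suc k)) = lambda_q q * hecke_sin q (Suc k) - hecke_sin q k"
proof -
  define t where "t = pi / real q"
  define x where "x = real (Suc k) * t"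
  have "real (Suc (Suc k)) * pi / real q = x + t" "real k * pi / real q = x - t"
       "real (Suc k) * pi / real q = x"
    unfolding x_def t_def by (cases "q = 0"; simp add: field_simps)+
  moreover have "sin (x + t) = 2 * cos t * sin x - sin (x - t)"
    by (simp add: sin_add sin_diff)
  ultimately show ?thesis
    unfolding hecke_sin_def lambda_q_def t_def[symmetric] by (simp add: diff_divide_distrib)
qed

lemma sin_pi_div_pos: "q \<ge> 2 \<Longrightarrow> sin (pi / real q) > 0"
  by (rule sin_gt_zero) (auto simp: field_simps)

lemma hecke_sin_0 [simp]: "hecke_sin q 0 = 0"
  by (simp add: hecke_sin_def)

lemma hecke_sin_1: "q \<ge> 2 \<Longrightarrow> hecke_sin q 1 = 1"
  using sin_pi_div_pos[of q] by (simp add: hecke_sin_def)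

lemma hecke_sin_2: "q \<ge> 2 \<Longrightarrow> hecke_sin q 2 = lambda_q q"
  using hecke_sin_Suc_Suc[of q 0] hecke_sin_1[of q] by (simp add: numeral_2_eq_2)

lemma hecke_sin_self: "hecke_sin q q = 0"
  by (cases "q = 0") (simp_all add: hecke_sin_def)

lemma hecke_sin_pred: "q \<ge> 2 \<Longrightarrow> hecke_sin q (q - 1) = 1"
proof -
  assume q: "q \<ge> 2"
  have "real (q - 1) * pi / real q = pi - pi / real q"
    using q by (simp add: of_nat_diff field_simps)
  then show ?thesis
    using sin_pi_div_pos[OF q] by (simp add: hecke_sin_def)
qed

lemma hecke_sin_pred2: "q \<ge> 2 \<Longrightarrow> hecke_sin q (q - 2) = lambda_q q"
proof -
  assume q: "q \<ge> 2"
  then have "Suc (Suc (q - 2)) = q" "Suc (q - 2) = q - 1" by arith+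
  then show ?thesis
    using hecke_sin_Suc_Suc[of q "q - 2"] hecke_sin_self[of q] hecke_sin_pred[OF q] by simp
qed

lemma hecke_sin_Suc_self: "q \<ge> 2 \<Longrightarrow> hecke_sin q (Suc q) = -1"
proof -
  assume q: "q \<ge> 2"
  then have "Suc (q - 1) = q" by arith
  then show ?thesis
    using hecke_sin_Suc_Suc[of q "q - 1"] hecke_sin_self[of q] hecke_sin_pred[OF q] by simp
qed

lemma hecke_sin_ge_1:
  assumes "q \<ge> 2" "1 \<le> k" "k < q"
  shows "hecke_sin q k \<ge> 1"
proof -
  define t where "t = pi / real q"
  have t: "0 < t" "t \<le> pi / 2"
    unfolding t_def using assms by (auto simp: field_simps)
  have "t \<le> real k * t"
    using t assms by simp
  moreover have "real k * t \<le> pi - t"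
  proof -
    have "real k * t \<le> (real q - 1) * t"
      using assms t by (intro mult_right_mono) auto
    also have "\<dots> = pi - t"
      unfolding t_def using assms by (simp add: field_simps)
    finally show ?thesis .
  qed
  ultimately have "sin t \<le> sin (real k * t)"
    using t sin_monotone_2pi_le[of t "real k * t"] sin_monotone_2pi_le[of t "pi - real k * t"]
    by (cases "real k * t \<le> pi / 2") auto
  moreover have "sin t > 0"
    unfolding t_def using sin_pi_div_pos[OF assms(1)] .
  ultimately show ?thesis
    unfolding hecke_sin_def t_def by simp
qed

definition zero_or_ge_1 :: "real \<Rightarrow> bool" where
  "zero_or_ge_1 x \<longleftrightarrow> x = 0 \<or> x \<ge> 1"

lemma zero_or_ge_1_hecke_sin:
  assumes "q \<ge> 2" "k \<le> q"
  shows "zero_or_ge_1 (hecke_sin q k)"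
  using hecke_sin_ge_1[of q k] hecke_sin_self[of q] assms
  unfolding zero_or_ge_1_def by (cases "k = 0 \<or> k = q") auto

lemma zero_or_ge_1_add: "zero_or_ge_1 x \<Longrightarrow> zero_or_ge_1 y \<Longrightarrow> zero_or_ge_1 (x + y)"
  unfolding zero_or_ge_1_def by auto

lemma zero_or_ge_1_mult: "zero_or_ge_1 x \<Longrightarrow> zero_or_ge_1 y \<Longrightarrow> zero_or_ge_1 (x * y)"
  unfolding zero_or_ge_1_def using mult_mono[of 1 x 1 y] by auto

lemma lambda_q_bounds: "q \<ge> 3 \<Longrightarrow> 1 \<le> lambda_q q \<and> lambda_q q < 2"
proof -
  assume q: "q \<ge> 3"
  have t: "0 < pi / real q" "pi / real q \<le> pi / 3"
    using q by (auto simp: field_simps)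
  then have "pi / real q \<le> pi"
    by linarith
  have "cos (pi / 3) \<le> cos (pi / real q)"
    using t by (intro cos_monotone_0_pi_le) auto
  moreover have "cos (pi / real q) < cos 0"
    using t \<open>pi / real q \<le> pi\<close> by (intro cos_monotone_0_pi) auto
  ultimately show ?thesis
    by (simp add: lambda_q_def cos_60)
qed

text \<open>The step multiplies by (T_q S)^(j+1) S^-1; the bound j + 2 \<le> q keeps its entries among
  the values hecke_sin q k with k \<le> q, which are 0 or \<ge> 1.\<close>
inductive_set hecke_cone :: "nat \<Rightarrow> (real \<times> real) set" for q :: nat where
  base1: "(1, 0) \<in> hecke_cone q"
| base2: "(0, 1) \<in> hecke_cone q"
| step: "(a, c) \<in> hecke_cone q \<Longrightarrow> j + 2 \<le> q \<Longrightarrow>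
    (hecke_sin q (j + 1) * a + hecke_sin q (j + 2) * c, hecke_sin q j * a + hecke_sin q (j + 1) * c)
      \<in> hecke_cone q"

lemma zero_or_ge_1_hecke_cone:
  assumes "(a, c) \<in> hecke_cone q" "q \<ge> 2"
  shows "zero_or_ge_1 a \<and> zero_or_ge_1 c"
  using assms(1)
proof (induction rule: hecke_cone.induct)
  case (step a c j)
  then have "zero_or_ge_1 (hecke_sin q i)" if "i \<le> j + 2" for i
    using that assms(2) by (intro zero_or_ge_1_hecke_sin) auto
  then show ?case
    using step.IH by (auto intro!: zero_or_ge_1_add zero_or_ge_1_mult)
qed (auto simp: zero_or_ge_1_def)

lemma hecke_cone_T:
  assumes "(a, c) \<in> hecke_cone q" "q \<ge> 2"
  shows "(a + lambda_q q * c, c) \<in> hecke_cone q"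
  using hecke_cone.step[OF assms(1), of 0] assms(2) hecke_sin_1[of q] hecke_sin_2[of q]
  by (simp add: numeral_2_eq_2)

lemma hecke_cone_lower_T:
  assumes "(a, c) \<in> hecke_cone q" "q \<ge> 2"
  shows "(a, lambda_q q * a + c) \<in> hecke_cone q"
proof -
  have "q - 2 + 1 = q - 1" "q - 2 + 2 = q"
    using assms(2) by arith+
  then show ?thesis
    using hecke_cone.step[OF assms(1), of "q - 2"] assms(2)
      hecke_sin_pred2[of q] hecke_sin_pred[of q] hecke_sin_self[of q] by simp
qed

definition rotated_hecke_cone :: "nat \<Rightarrow> (real^2) set" where
  "rotated_hecke_cone q = {vec2 x y | x y.
     (x, y) \<in> hecke_cone q \<or> (-x, -y) \<in> hecke_cone q \<or>
     (y, -x) \<in> hecke_cone q \<or> (-y, x) \<in> hecke_cone q}"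

lemma vec2_in_rotated_hecke_cone_iff:
  "vec2 x y \<in> rotated_hecke_cone q \<longleftrightarrow>
     (x, y) \<in> hecke_cone q \<or> (-x, -y) \<in> hecke_cone q \<or>
     (y, -x) \<in> hecke_cone q \<or> (-y, x) \<in> hecke_cone q"
  by (auto simp: rotated_hecke_cone_def vec2_eq_iff)

lemma rotated_hecke_cone_uminus:
  "vec2 x y \<in> rotated_hecke_cone q \<Longrightarrow> vec2 (-x) (-y) \<in> rotated_hecke_cone q"
  by (auto simp: vec2_in_rotated_hecke_cone_iff)

lemma rotated_hecke_cone_rotate:
  "vec2 x y \<in> rotated_hecke_cone q \<Longrightarrow> vec2 (-y) x \<in> rotated_hecke_cone q"
  by (auto simp: vec2_in_rotated_hecke_cone_iff)

lemma hecke_cone_T_inv: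
  assumes "(a, c) \<in> hecke_cone q" "q \<ge> 2"
  shows "vec2 (a - lambda_q q * c) c \<in> rotated_hecke_cone q"
  using assms(1)
proof cases
  case base1
  then show ?thesis by (simp add: vec2_in_rotated_hecke_cone_iff hecke_cone.base1)
next
  case base2
  then show ?thesis
    using hecke_cone_lower_T[OF hecke_cone.base1 assms(2)] by (simp add: vec2_in_rotated_hecke_cone_iff)
next
  case (step a' c' j)
  let ?s = "hecke_sin q"
  show ?thesis
  proof (cases j)
    case 0
    then show ?thesis
      using step assms(2) hecke_sin_1[of q] hecke_sin_2[of q]
      by (simp add: vec2_in_rotated_hecke_cone_iff numeral_2_eq_2)
  next
    case (Suc i)
    have "(?s (i + 1) * a' + ?s (i + 2) * c', ?s i * a' + ?s (i + 1) * c') \<in> hecke_cone q"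
      using step Suc by (intro hecke_cone.step) auto
    moreover have "- (a - lambda_q q * c) = ?s i * a' + ?s (i + 1) * c'"
      unfolding step(1,2) Suc by (simp add: hecke_sin_Suc_Suc algebra_simps)
    moreover have "c = ?s (i + 1) * a' + ?s (i + 2) * c'"
      using step Suc by (simp add: eval_nat_numeral)
    ultimately have "(c, - (a - lambda_q q * c)) \<in> hecke_cone q"
      by (simp only:)
    then show ?thesis
      by (simp add: vec2_in_rotated_hecke_cone_iff)
  qed
qed

lemma hecke_cone_rotated_T:
  assumes "(a, c) \<in> hecke_cone q" "q \<ge> 2"
  shows "vec2 (lambda_q q * a - c) a \<in> rotated_hecke_cone q"
  using assms(1)
proof cases
  case base1
  then show ?thesis
    using hecke_cone_T[OF hecke_cone.base2 assms(2)] by (simp add: vec2_in_rotated_hecke_cone_iff)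
next
  case base2
  then show ?thesis by (simp add: vec2_in_rotated_hecke_cone_iff hecke_cone.base1)
next
  case (step a' c' j)
  let ?s = "hecke_sin q"
  have lambda_a_c: "lambda_q q * a - c = ?s (j + 2) * a' + ?s (j + 3) * c'"
    unfolding step(1,2) by (simp add: hecke_sin_Suc_Suc algebra_simps eval_nat_numeral)
  show ?thesis
  proof (cases "j + 3 \<le> q")
    case True
    have "(?s (j + 2) * a' + ?s (j + 3) * c', ?s (j + 1) * a' + ?s (j + 2) * c') \<in> hecke_cone q"
      using step True hecke_cone.step[of a' c' q "j + 1"] by (simp add: eval_nat_numeral)
    then show ?thesis
      using step lambda_a_c by (simp add: vec2_in_rotated_hecke_cone_iff)
  next
    case False
    then have q: "q = j + 2"
      using step by arith
    have "?s (j + 1) = 1" "?s (j + 2) = 0" "?s (j + 3) = -1"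
      using hecke_sin_pred[of q] hecke_sin_self[of q] hecke_sin_Suc_self[of q]
      unfolding q by (simp_all add: eval_nat_numeral)
    then have "lambda_q q * a - c = - c'" "a = a'"
      unfolding lambda_a_c using step by simp_all
    then show ?thesis
      using step by (simp add: vec2_in_rotated_hecke_cone_iff)
  qed
qed

lemma rotated_hecke_cone_T:
  assumes "vec2 x y \<in> rotated_hecke_cone q" "q \<ge> 2"
  shows "vec2 (x + lambda_q q * y) y \<in> rotated_hecke_cone q"
proof -
  from assms(1) consider "(x, y) \<in> hecke_cone q" | "(- x, - y) \<in> hecke_cone q"
    | "(y, - x) \<in> hecke_cone q" | "(- y, x) \<in> hecke_cone q"
    unfolding vec2_in_rotated_hecke_cone_iff by blast
  then show ?thesis
  proof cases
    case 1
    then show ?thesis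
      using hecke_cone_T[OF _ assms(2)] by (simp add: vec2_in_rotated_hecke_cone_iff)
  next
    case 2
    then have "(- x + lambda_q q * - y, - y) \<in> hecke_cone q"
      by (rule hecke_cone_T[OF _ assms(2)])
    then show ?thesis
      by (simp add: vec2_in_rotated_hecke_cone_iff)
  next
    case 3
    then have "vec2 (lambda_q q * y - - x) y \<in> rotated_hecke_cone q"
      by (rule hecke_cone_rotated_T[OF _ assms(2)])
    then show ?thesis
      by (simp add: add.commute)
  next
    case 4
    then have "vec2 (lambda_q q * - y - x) (- y) \<in> rotated_hecke_cone q"
      by (rule hecke_cone_rotated_T[OF _ assms(2)])
    then show ?thesis
      using rotated_hecke_cone_uminus by fastforce
  qed
qed

lemma rotated_hecke_cone_T_inv:
  assumes "vec2 x y \<in> rotated_hecke_cone q" "q \<ge> 2"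
  shows "vec2 (x - lambda_q q * y) y \<in> rotated_hecke_cone q"
proof -
  from assms(1) consider "(x, y) \<in> hecke_cone q" | "(- x, - y) \<in> hecke_cone q"
    | "(y, - x) \<in> hecke_cone q" | "(- y, x) \<in> hecke_cone q"
    unfolding vec2_in_rotated_hecke_cone_iff by blast
  then show ?thesis
  proof cases
    case 1
    then show ?thesis
      by (rule hecke_cone_T_inv[OF _ assms(2)])
  next
    case 2
    then have "vec2 (- x - lambda_q q * - y) (- y) \<in> rotated_hecke_cone q"
      by (rule hecke_cone_T_inv[OF _ assms(2)])
    then show ?thesis
      using rotated_hecke_cone_uminus by fastforce
  next
    case 3
    then have "(y, lambda_q q * y + - x) \<in> hecke_cone q"
      by (rule hecke_cone_lower_T[OF _ assms(2)])
    then show ?thesis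
      by (simp add: vec2_in_rotated_hecke_cone_iff)
  next
    case 4
    then have "(- y, lambda_q q * - y + x) \<in> hecke_cone q"
      by (rule hecke_cone_lower_T[OF _ assms(2)])
    then show ?thesis
      by (simp add: vec2_in_rotated_hecke_cone_iff)
  qed
qed

lemma rotated_hecke_cone_hecke_group:
  assumes "A \<in> hecke_group q" "v \<in> rotated_hecke_cone q" "q \<ge> 2"
  shows "A *v v \<in> rotated_hecke_cone q"
  using assms(1,2)
proof (induction arbitrary: v rule: hecke_group.induct)
  case one
  then show ?case by simp
next
  case S
  then show ?case
    by (cases v) (simp add: S_mat_def mat2_mult_vec2 rotated_hecke_cone_rotate)
next
  case S_inv
  then show ?case
    by (cases v) (simp add: S_mat_def det_mat2 matrix_inv_eq_adj2 mat2_mult_vec2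
        rotated_hecke_cone_uminus[OF rotated_hecke_cone_rotate, simplified])
next
  case T
  then show ?case
    by (cases v) (simp add: T_mat_def mat2_mult_vec2 rotated_hecke_cone_T assms(3))
next
  case T_inv
  then show ?case
    by (cases v) (simp add: T_mat_def det_mat2 matrix_inv_eq_adj2 mat2_mult_vec2
        rotated_hecke_cone_T_inv[OF _ assms(3), simplified])
next
  case (mult A B)
  then show ?case by (simp add: matrix_vector_mul_assoc[symmetric])
qed

lemma zero_or_ge_1_Lambda_q:
  assumes "vec2 x y \<in> Lambda_q q" "q \<ge> 2"
  shows "zero_or_ge_1 \<bar>x\<bar> \<and> zero_or_ge_1 \<bar>y\<bar>"
proof -
  obtain g where "g \<in> hecke_group q" "vec2 x y = g *v vec2 1 0"
    using assms(1) unfolding Lambda_q_def by auto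
  then have "vec2 x y \<in> rotated_hecke_cone q"
    using rotated_hecke_cone_hecke_group[OF _ _ assms(2)] hecke_cone.base1
    by (simp add: vec2_in_rotated_hecke_cone_iff)
  then show ?thesis
    using zero_or_ge_1_hecke_cone[OF _ assms(2)]
    unfolding vec2_in_rotated_hecke_cone_iff zero_or_ge_1_def by force
qed

lemma Lambda_q_second_coord_1:
  assumes q: "q \<ge> 3" and x: "vec2 x 1 \<in> Lambda_q q"
  shows "\<exists>m::int. x = of_int m * lambda_q q"
proof -
  define l where "l = lambda_q q"
  have l: "1 \<le> l" "l < 2"
    using lambda_q_bounds[OF q] l_def by auto
  \<comment> \<open>a nearest integer to x / l, so that |x - m l| \<le> l / 2 < 1\<close>
  define m where "m = \<lfloor>x / l + 1/2\<rfloor>"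
  have "of_int m \<le> x / l + 1/2" "x / l + 1/2 < of_int m + 1"
    unfolding m_def by linarith+
  then have "of_int m * l \<le> x + l/2" "x - l/2 < of_int m * l"
    using l by (simp_all add: field_simps)
  then have small: "\<bar>x - of_int m * l\<bar> < 1"
    using l by linarith
  obtain k where k: "k \<in> hecke_group q" "vec2 x 1 = k *v vec2 1 0"
    using x unfolding Lambda_q_def by auto
  have "mat2 0 (-1) 1 0 ** (mat2 1 (of_int (- m) * l) 0 1 ** k) \<in> hecke_group q"
    unfolding l_def by (intro hecke_group.mult S_mat_hecke_group T_mat_power_hecke_group k(1))
  moreover have "(mat2 0 (-1) 1 0 ** (mat2 1 (of_int (- m) * l) 0 1 ** k)) *v vec2 1 0 =
      vec2 (-1) (x - of_int m * l)"
    by (simp add: matrix_vector_mul_assoc[symmetric] k(2)[symmetric] mat2_mult_vec2 algebra_simps)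
  ultimately have "vec2 (-1) (x - of_int m * l) \<in> Lambda_q q"
    by (metis hecke_group_mult_e1_in_Lambda)
  then have "zero_or_ge_1 \<bar>x - of_int m * l\<bar>"
    using zero_or_ge_1_Lambda_q q by fastforce
  then have "x = of_int m * l"
    using small unfolding zero_or_ge_1_def by auto
  then show ?thesis
    unfolding l_def by blast
qed

section \<open>Stabilizers and cosets\<close>

lemma mem_mat_image_Lambda_q_iff:
  "v \<in> mat_image A (Lambda_q q) \<longleftrightarrow> (\<exists>g \<in> hecke_group q. v = (A ** g) *v vec2 1 0)"
  unfolding mat_image_def Lambda_q_def by (auto simp flip: matrix_vector_mul_assoc)

lemma mat2_of_mult_e1:
  assumes "det P = 1" "P *v vec2 1 0 = vec2 a 0"
  shows "P = mat2 a (P$1$2) 0 (inverse a)"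
proof (cases P)
  case (1 a' b c d)
  then have "a' = a" "c = 0"
    using assms(2) by (simp_all add: mat2_mult_vec2 vec2_eq_iff)
  moreover have "a * d = 1"
    using assms(1) 1 calculation by (simp add: det_mat2)
  then have "d = inverse a"
    by (rule inverse_unique[symmetric])
  ultimately show ?thesis
    using 1 by simp
qed

lemma hecke_group_of_basis_in_mat_image:
  assumes q: "q \<ge> 3" and A: "A \<in> SL2"
    and e1: "vec2 1 0 \<in> mat_image A (Lambda_q q)" and e2: "vec2 0 1 \<in> mat_image A (Lambda_q q)"
  shows "A \<in> hecke_group q"
proof -
  obtain g where g: "g \<in> hecke_group q" "vec2 1 0 = (A ** g) *v vec2 1 0"
    using e1 unfolding mem_mat_image_Lambda_q_iff by blast
  obtain h where h: "h \<in> hecke_group q" "vec2 0 1 = (A ** h) *v vec2 1 0"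
    using e2 unfolding mem_mat_image_Lambda_q_iff by blast
  define x where "x = (A ** g)$1$2"
  have "det (A ** g) = 1"
    using A det_hecke_group[OF g(1)] by (simp add: SL2_def det_mul)
  then have Ag: "A ** g = mat2 1 x 0 1"
    using mat2_of_mult_e1[of "A ** g" 1] g(2) unfolding x_def by simp
  have g_adj: "g ** adj2 g = mat 1"
    using mult_adj2_right[OF det_hecke_group[OF g(1)]] .
  define k where "k = adj2 g ** h"
  have k: "k \<in> hecke_group q"
    unfolding k_def by (intro hecke_group.mult adj2_hecke_group g(1) h(1))
  obtain u w where uw: "k *v vec2 1 0 = vec2 u w"
    by (cases "k *v vec2 1 0")
  have "g ** k = h"
    unfolding k_def by (simp add: matrix_mul_assoc g_adj)
  then have "mat2 1 x 0 1 *v vec2 u w = vec2 0 1"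
    unfolding h(2) Ag[symmetric] uw[symmetric]
    by (simp add: matrix_vector_mul_assoc matrix_mul_assoc[symmetric])
  then have "u = - x" "w = 1"
    by (auto simp: mat2_mult_vec2 vec2_eq_iff)
  then have "vec2 (- x) 1 \<in> Lambda_q q"
    using hecke_group_mult_e1_in_Lambda[OF k] uw by simp
  then obtain m :: int where "- x = of_int m * lambda_q q"
    using Lambda_q_second_coord_1[OF q] by blast
  then have "A ** g = mat2 1 (of_int (- m) * lambda_q q) 0 1"
    using Ag by (simp add: mat2_eq_iff)
  then have "A ** g \<in> hecke_group q"
    using T_mat_power_hecke_group by metis
  moreover have "A = (A ** g) ** adj2 g"
    by (simp add: matrix_mul_assoc[symmetric] g_adj)
  ultimately show ?thesis
    using adj2_hecke_group[OF g(1)] by (metis hecke_group.mult)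
qed

lemma mat_image_Lambda_q_eq_iff:
  assumes "q \<ge> 3" "B \<in> SL2"
  shows "mat_image B (Lambda_q q) = Lambda_q q \<longleftrightarrow> B \<in> hecke_group q"
  using hecke_group_of_basis_in_mat_image[OF assms] e1_in_Lambda e2_in_Lambda mat_image_hecke_group
  by metis

lemma left_coset_hecke_group:
  assumes "B \<in> hecke_group q"
  shows "left_coset B (hecke_group q) = hecke_group q"
proof
  show "left_coset B (hecke_group q) \<subseteq> hecke_group q"
    unfolding left_coset_def using assms by (auto intro: hecke_group.mult)
  show "hecke_group q \<subseteq> left_coset B (hecke_group q)"
  proof
    fix g
    assume g: "g \<in> hecke_group q"
    have "g = B ** (adj2 B ** g)"
      using mult_adj2_right[OF det_hecke_group[OF assms]] by (simp add: matrix_mul_assoc)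
    moreover have "adj2 B ** g \<in> hecke_group q"
      by (intro hecke_group.mult adj2_hecke_group assms g)
    ultimately show "g \<in> left_coset B (hecke_group q)"
      unfolding left_coset_def by blast
  qed
qed

lemma left_coset_mult: "left_coset (C ** B) G = left_coset C (left_coset B G)"
  unfolding left_coset_def by (simp add: image_image matrix_mul_assoc)

lemma mat_image_Lambda_q_eq_iff_left_coset:
  assumes q: "q \<ge> 3" and C: "C \<in> SL2" and D: "D \<in> SL2"
  shows "mat_image C (Lambda_q q) = mat_image D (Lambda_q q)
         \<longleftrightarrow> left_coset C (hecke_group q) = left_coset D (hecke_group q)"
proof
  assume eq: "mat_image C (Lambda_q q) = mat_image D (Lambda_q q)"
  have D1: "det D = 1"
    using D by (simp add: SL2_def)
  define B where "B = adj2 D ** C"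
  have "B \<in> SL2"
    using C D1 by (simp add: B_def SL2_def det_mul det_adj2)
  moreover have "mat_image B (Lambda_q q) = Lambda_q q"
    unfolding B_def mat_image_mult eq mat_image_mult[symmetric] mult_adj2_left[OF D1]
    by (simp add: mat_image_def)
  ultimately have "B \<in> hecke_group q"
    using mat_image_Lambda_q_eq_iff[OF q] by blast
  moreover have "C = D ** B"
    unfolding B_def by (simp add: matrix_mul_assoc mult_adj2_right[OF D1])
  ultimately show "left_coset C (hecke_group q) = left_coset D (hecke_group q)"
    by (simp add: left_coset_mult left_coset_hecke_group)
next
  assume eq: "left_coset C (hecke_group q) = left_coset D (hecke_group q)"
  have "C \<in> left_coset C (hecke_group q)"
    unfolding left_coset_def using hecke_group.one by force
  then obtain g where "g \<in> hecke_group q" "C = D ** g"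
    using eq unfolding left_coset_def by auto
  then show "mat_image C (Lambda_q q) = mat_image D (Lambda_q q)"
    by (simp add: mat_image_mult mat_image_hecke_group)
qed

lemma bij_betw_images_of_same_fibres:
  assumes "\<And>x y. x \<in> S \<Longrightarrow> y \<in> S \<Longrightarrow> F x = F y \<longleftrightarrow> G x = G y"
  shows "\<exists>f. bij_betw f (F ` S) (G ` S) \<and> (\<forall>x \<in> S. f (F x) = G x)"
proof (intro exI conjI ballI)
  show f: "(G \<circ> inv_into S F) (F x) = G x" if "x \<in> S" for x
    using assms[of "inv_into S F (F x)" x] that by (simp add: inv_into_into f_inv_into_f)
  show "bij_betw (G \<circ> inv_into S F) (F ` S) (G ` S)"
    unfolding bij_betw_def inj_on_def using f assms by (auto simp: image_iff)
qed

lemma mat_image_Lambda_q_horizontal: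
  assumes B: "B \<in> SL2" and v: "vec2 a 0 \<in> mat_image B (Lambda_q q)"
  shows "\<exists>b. mat_image B (Lambda_q q) = mat_image (g_ab a b) (Lambda_q q)"
proof -
  obtain h where h: "h \<in> hecke_group q" "vec2 a 0 = (B ** h) *v vec2 1 0"
    using v unfolding mem_mat_image_Lambda_q_iff by blast
  have "det (B ** h) = 1"
    using B det_hecke_group[OF h(1)] by (simp add: SL2_def det_mul)
  then have "B ** h = g_ab a ((B ** h)$1$2)"
    using mat2_of_mult_e1 h(2) unfolding g_ab_def by metis
  moreover have "mat_image B (Lambda_q q) = mat_image (B ** h) (Lambda_q q)"
    by (simp add: mat_image_mult mat_image_hecke_group[OF h(1)])
  ultimately show ?thesis
    by metis
qed

theorem mainTheorem4:
  fixes q :: nat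
  assumes "q \<ge> 3"
  shows "(\<forall>A \<in> SL2. vec2 1 0 \<in> mat_image A (Lambda_q q) \<and> vec2 0 1 \<in> mat_image A (Lambda_q q)
            \<longrightarrow> A \<in> hecke_group q \<and> mat_image A (Lambda_q q) = Lambda_q q)
       \<and> (\<forall>B \<in> SL2. mat_image B (Lambda_q q) = Lambda_q q \<longleftrightarrow> B \<in> hecke_group q)
       \<and> (\<forall>C \<in> SL2. \<forall>D \<in> SL2. mat_image C (Lambda_q q) = mat_image D (Lambda_q q)
            \<longleftrightarrow> left_coset C (hecke_group q) = left_coset D (hecke_group q))
       \<and> (\<exists>f. bij_betw f {mat_image C (Lambda_q q) | C. C \<in> SL2}
                         {left_coset C (hecke_group q) | C. C \<in> SL2}
             \<and> (\<forall>C \<in> SL2. f (mat_image C (Lambda_q q)) = left_coset C (hecke_group q)))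
       \<and> (\<forall>B \<in> SL2. \<forall>a > 0. vec2 a 0 \<in> mat_image B (Lambda_q q)
            \<longrightarrow> (\<exists>b. mat_image B (Lambda_q q) = mat_image (g_ab a b) (Lambda_q q)))"
proof (intro conjI)
  show "\<forall>A \<in> SL2. vec2 1 0 \<in> mat_image A (Lambda_q q) \<and> vec2 0 1 \<in> mat_image A (Lambda_q q)
          \<longrightarrow> A \<in> hecke_group q \<and> mat_image A (Lambda_q q) = Lambda_q q"
    using hecke_group_of_basis_in_mat_image[OF assms] mat_image_hecke_group by blast
  show "\<forall>B \<in> SL2. mat_image B (Lambda_q q) = Lambda_q q \<longleftrightarrow> B \<in> hecke_group q"
    using mat_image_Lambda_q_eq_iff[OF assms] by blast
  show "\<forall>C \<in> SL2. \<forall>D \<in> SL2. mat_image C (Lambda_q q) = mat_image D (Lambda_q q)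
          \<longleftrightarrow> left_coset C (hecke_group q) = left_coset D (hecke_group q)"
    using mat_image_Lambda_q_eq_iff_left_coset[OF assms] by blast
  show "\<exists>f. bij_betw f {mat_image C (Lambda_q q) | C. C \<in> SL2}
                     {left_coset C (hecke_group q) | C. C \<in> SL2}
         \<and> (\<forall>C \<in> SL2. f (mat_image C (Lambda_q q)) = left_coset C (hecke_group q))"
    using bij_betw_images_of_same_fibres[OF mat_image_Lambda_q_eq_iff_left_coset[OF assms]]
    by (simp add: Setcompr_eq_image)
  show "\<forall>B \<in> SL2. \<forall>a > 0. vec2 a 0 \<in> mat_image B (Lambda_q q)
          \<longrightarrow> (\<exists>b. mat_image B (Lambda_q q) = mat_image (g_ab a b) (Lambda_q q))"
    using mat_image_Lambda_q_horizontal by blast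
qed

end
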